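(* Let $\mathcal{D}$ be a basic action theory of the situation calculus and let $\langle \mathcal{D}, \varphi, s\rangle$ be a causal setting. Then $$\mathcal{D}\models \forall a,a',ts,ts'.\; \mathit{CausesDir}(a,ts,\varphi,s)\land \mathit{CausesDir}(a',ts',\varphi,s)\supset a=a'\land ts=ts'.$$
   Context: Situation calculus: $S_0$ is the initial situation and $do(a,s)$ is the situation resulting from performing action $a$ in $s$. $s\sqsubset s'$ means $s'$ is reachable from $s$ by performing one or more actions, and $s\sqsubseteq s'$ abbreviates $s\sqsubset s'\lor s=s'$. $\mathit{Poss}(a,s)$ means $a$ is executable in $s$; $\mathit{Exec}(s)$ abbreviates $\forall a',s'.\,do(a',s')\sqsubseteq s\supset \mathit{Poss}(a',s')$ (in the temporal variant additionally $\mathit{start}(s')\le \mathit{time}(a')$). $s<s'$ abbreviates $s\sqsubset s'\land \mathit{Exec}(s')$, and $s\le s'$ abbreviates $s<s'\lor s=s'$. Situations carry time-stamps: $\mathit{timeStamp}(S_0)=0$ and $\mathit{timeStamp}(do(a,s))=\mathit{timeStamp}(s)+1$. For a situation-suppressed formula $\varphi$, $\varphi[s]$ denotes $\varphi$ with situation argument $s$ restored in all fluents. A causal setting $\langle\mathcal{D},\varphi,s\rangle$ consists of a ground situation $s$ and a situation-suppressed formula $\varphi$ with $\mathcal{D}\models \mathit{Exec}(s)\land\neg\varphi[S_0]\land\varphi[s]$. Direct (primary) cause: $$\mathit{CausesDir}(a,ts,\varphi,s)\doteq \exists s_a.\;\mathit{timeStamp}(s_a)=ts\land (S_0<do(a,s_a)\le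 s)\land\neg\varphi[s_a]\land\forall s'.(do(a,s_a)\le s'\le s\supset\varphi[s']).$$ *)

theory Defs
  imports Main
begin

text \<open>By the foundational axioms of any basic
action theory, the situations form a tree rooted at S0 with do injective; we represent
a situation by its (reversed) list of performed actions.\<close>

type_synonym 'a situation = "'a list"

definition S0 :: "'a situation" where "S0 = []"

definition sdo :: "'a \<Rightarrow> 'a situation \<Rightarrow> 'a situation" where
  "sdo a s = a # s"

definition sprec :: "'a situation \<Rightarrow> 'a situation \<Rightarrow> bool" where
  "sprec s s' \<longleftrightarrow> (\<exists>ys. ys \<noteq> [] \<and> s' = ys @ s)"

definition sprec_eq :: "'a situation \<Rightarrow> 'a situation \<Rightarrow> bool" where
  "sprec_eq s s' \<longleftrightarrow> sprec s s' \<or> s = s'"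

definition Exec :: "('a \<Rightarrow> 'a situation \<Rightarrow> bool) \<Rightarrow> 'a situation \<Rightarrow> bool" where
  "Exec Poss s \<longleftrightarrow> (\<forall>a' s'. sprec_eq (sdo a' s') s \<longrightarrow> Poss a' s')"

definition slt :: "('a \<Rightarrow> 'a situation \<Rightarrow> bool) \<Rightarrow> 'a situation \<Rightarrow> 'a situation \<Rightarrow> bool" where
  "slt Poss s s' \<longleftrightarrow> sprec s s' \<and> Exec Poss s'"

definition sle :: "('a \<Rightarrow> 'a situation \<Rightarrow> bool) \<Rightarrow> 'a situation \<Rightarrow> 'a situation \<Rightarrow> bool" where
  "sle Poss s s' \<longleftrightarrow> slt Poss s s' \<or> s = s'"

primrec timeStamp :: "'a situation \<Rightarrow> nat" where
  "timeStamp [] = 0"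
| "timeStamp (a # s) = timeStamp s + 1"

text \<open>A causal setting: phi is the (interpretation of the) situation-suppressed formula.\<close>
definition causal_setting ::
  "('a \<Rightarrow> 'a situation \<Rightarrow> bool) \<Rightarrow> ('a situation \<Rightarrow> bool) \<Rightarrow> 'a situation \<Rightarrow> bool" where
  "causal_setting Poss phi s \<longleftrightarrow> Exec Poss s \<and> \<not> phi S0 \<and> phi s"

definition CausesDir ::
  "('a \<Rightarrow> 'a situation \<Rightarrow> bool) \<Rightarrow> 'a \<Rightarrow> nat \<Rightarrow> ('a situation \<Rightarrow> bool) \<Rightarrow> 'a situation \<Rightarrow> bool" where
  "CausesDir Poss a ts phi s \<longleftrightarrow>
     (\<exists>sa. timeStamp sa = ts \<and> slt Poss S0 (sdo a sa) \<and> sle Poss (sdo a sa) s \<and> \<not> phi sa \<and>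
        (\<forall>s'. sle Poss (sdo a sa) s' \<and> sle Poss s' s \<longrightarrow> phi s'))"

end

theory Submission
  imports Defs "HOL-Library.Sublist"
begin

text \<open>Along an executable situation s, the situations preceding s are exactly the suffixes
of the action history of s, and these form a chain. A direct cause is a point of this chain
where phi changes from false to true and after which it stays true up to s. Two such points
cannot differ: the later one would lie inside the interval on which the earlier one keeps phi
true, yet phi is false just before it.\<close>

lemma sprec_eq_iff_suffix: "sprec_eq s s' \<longleftrightarrow> suffix s s'"
  unfolding sprec_eq_def sprec_def suffix_def by force

lemma Exec_suffix:
  assumes "Exec Poss s" "suffix s' s"
  shows "Exec Poss s'"
  using assms suffix_order.trans unfolding Exec_def sprec_eq_iff_suffix by blast

lemma sle_iff_suffix:
  assumes "Exec Poss s"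
  shows "sle Poss s' s \<longleftrightarrow> suffix s' s"
  using assms unfolding sle_def slt_def sprec_def suffix_def by force

lemma CausesDir_suffixE:
  assumes "CausesDir Poss a ts phi s" "Exec Poss s"
  obtains sa where "timeStamp sa = ts" "suffix (a # sa) s" "\<not> phi sa"
    "\<And>s'. suffix (a # sa) s' \<Longrightarrow> suffix s' s \<Longrightarrow> phi s'"
proof -
  obtain sa where "timeStamp sa = ts" "sle Poss (sdo a sa) s" "\<not> phi sa"
      and stays: "\<forall>s'. sle Poss (sdo a sa) s' \<and> sle Poss s' s \<longrightarrow> phi s'"
    using assms(1) unfolding CausesDir_def by blast
  moreover have "phi s'" if "suffix (a # sa) s'" "suffix s' s" for s'
  proof -
    have "Exec Poss s'"
      using Exec_suffix[OF assms(2) \<open>suffix s' s\<close>] .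
    then show ?thesis
      using stays that sle_iff_suffix[OF assms(2)] sle_iff_suffix[of Poss s'] by (simp add: sdo_def)
  qed
  ultimately show thesis
    using that sle_iff_suffix[OF assms(2)] by (simp add: sdo_def)
qed

lemma change_point_eq_of_suffix:
  assumes "suffix (a # sa) (b # sb)" "suffix (b # sb) s"
    and "\<And>s'. suffix (a # sa) s' \<Longrightarrow> suffix s' s \<Longrightarrow> phi s'" "\<not> phi sb"
  shows "a # sa = b # sb"
  using assms suffix_ConsD suffix_Cons by metis

lemma change_point_unique:
  assumes "suffix (a # sa) s" "\<not> phi sa" "\<And>s'. suffix (a # sa) s' \<Longrightarrow> suffix s' s \<Longrightarrow> phi s'"
    and "suffix (b # sb) s" "\<not> phi sb" "\<And>s'. suffix (b # sb) s' \<Longrightarrow> suffix s' s \<Longrightarrow> phi s'"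
  shows "a # sa = b # sb"
  using suffix_same_cases[OF assms(1,4)] change_point_eq_of_suffix[of a sa b sb s phi]
    change_point_eq_of_suffix[of b sb a sa s phi] assms by metis

theorem lemma5p1:
  fixes Poss :: "'a \<Rightarrow> 'a situation \<Rightarrow> bool"
    and phi :: "'a situation \<Rightarrow> bool"
    and s :: "'a situation"
  assumes "causal_setting Poss phi s"
  shows "\<forall>a a' ts ts'. CausesDir Poss a ts phi s \<and> CausesDir Poss a' ts' phi s
           \<longrightarrow> a = a' \<and> ts = ts'"
proof (intro allI impI)
  fix a a' ts ts'
  assume causes: "CausesDir Poss a ts phi s \<and> CausesDir Poss a' ts' phi s"
  have exec: "Exec Poss s"
    using assms unfolding causal_setting_def by blast
  obtain sa where "timeStamp sa = ts" "suffix (a # sa) s" "\<not> phi sa"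
      "\<And>s'. suffix (a # sa) s' \<Longrightarrow> suffix s' s \<Longrightarrow> phi s'"
    using causes exec CausesDir_suffixE by metis
  moreover obtain sb where "timeStamp sb = ts'" "suffix (a' # sb) s" "\<not> phi sb"
      "\<And>s'. suffix (a' # sb) s' \<Longrightarrow> suffix s' s \<Longrightarrow> phi s'"
    using causes exec CausesDir_suffixE by metis
  ultimately have "a # sa = a' # sb"
    using change_point_unique by metis
  then show "a = a' \<and> ts = ts'"
    using \<open>timeStamp sa = ts\<close> \<open>timeStamp sb = ts'\<close> by simp
qed

end
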